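(* At every stage of MAPTree, for every OR node $u$ for which $LB[u]$ has been assigned, $LB[u]\le f(u)$, and for every AND node $a\in\mathcal G'$, $LB[a]\le f(a)$, where $f$ denotes the true value.
   Context: Let $x_1,\dots,x_N\in\{0,1\}^F$ be a binary dataset $\mathcal X$ with labels $\mathcal Y\in\{0,1\}^N$, $[N]=\{1,\dots,N\}$. For $\mathcal I\subseteq[N]$, $f\in[F]$, $k\in\{0,1\}$ let $\mathcal I|_{f=k}=\{i\in\mathcal I:(x_i)_f=k\}$, $c^k(\mathcal I)=|\{i\in\mathcal I:y_i=k\}|$, $\mathcal V(\mathcal I)=\{f:\mathcal I|_{f=0}\neq\emptyset\text{ and }\mathcal I|_{f=1}\neq\emptyset\}$. Fix $\rho^1,\rho^0>0$, $\alpha\in(0,1)$, $\beta\ge0$; $\ell_{\rm leaf}(c^1,c^0)=B(c^1+\rho^1,c^0+\rho^0)/B(\rho^1,\rho^0)$ ($B$ the Beta function), $p_{\rm split}(d)=\alpha(1+d)^{-\beta}$, $p_{\rm leaf}(d,\mathcal I)=1$ if $\mathcal V(\mathcal I)=\emptyset$ else $1-p_{\rm split}(d)$, $p_{\rm inner}(d,\mathcal I)=0$ if $\mathcal V(\mathcal I)=\emptyset$ else $p_{\rm split}(d)/|\mathcal V(\mathcal I)|$; $-\log0=+\infty$, and a minimum over an empty set is $+\infty$. Graph $\mathcal G=\mathcal G_{\mathcal X,\mathcal Y}$: for nonempty $\mathcal I\subseteq[N]$, $d\in\{0,\dots,F\}$, an OR node $o_{\mathcal I,d}$ with terminal child $t_{\mathcal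 I,d}$ (edge cost $-\log p_{\rm leaf}(d,\mathcal I)-\log\ell_{\rm leaf}(c^1(\mathcal I),c^0(\mathcal I))$); for $d<F$, $f\in\mathcal V(\mathcal I)$, an AND child $a_{\mathcal I,d,f}$ (edge cost $-\log p_{\rm inner}(d,\mathcal I)$) with cost-$0$ edges to $o_{\mathcal I|_{f=0},d+1}$, $o_{\mathcal I|_{f=1},d+1}$; root $r=o_{[N],0}$; only nodes reachable from $r$ kept. A partial solution rooted at an OR node $u$ is a node set $\mathcal S\ni u$ of $\mathcal G$, all of whose nodes are reachable from $u$ inside $\mathcal S$, with every AND node of $\mathcal S$ having both children in $\mathcal S$ and every OR node exactly one child in $\mathcal S$; its cost is the sum of costs of edges $v\to w$ with $v,w\in\mathcal S$. The true value $f(u)$ of an OR node $u$ is the minimum cost of a partial solution rooted at $u$ in $\mathcal G$; for an AND node $a$ with children $o_0,o_1$, $f(a)=f(o_0)+f(o_1)$. Heuristic: $h(o_{\mathcal I,d})=-\max\{\log\ell_{\rm leaf}(c^1(\mathcal I),c^0(\mathcal I)),\log p_{\rm split}(d)+\log\ell_{\rm leaf}(c^1(\mathcal I),0)+\log\ell_{\rm leaf}(0,c^0(\mathcal I))\}$. MAPTree maintains a node set $\mathcal G'$, a set $\mathcal E$ of expanded OR nodes, and values $LB[u],UB[u]\in\mathbb R\cup\{+\infty\}$ for OR nodes ($UB[u]=+\infty$ until set); for an AND node $a$ with children $o_0,o_1$, $LB[a]=LB[o_0]+LB[o_1]$ and $UB[a]=UB[o_0]+UB[o_1]$. Initialize $\mathcal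 G'=\{r\}$, $\mathcal E=\emptyset$, $LB[r]=h(r)$, $UB[r]=+\infty$. While $LB[r]<UB[r]$ (and optionally while time remains): (1) $o:=r$; while $o\in\mathcal E$, choose an AND child $a^*$ of $o$ minimizing $\mathrm{cost}(o,a)+LB[a]$, with children $o_0$ (value-0 side) and $o_1$, and set $o:=o_0$ if $UB[o_0]-LB[o_0]>UB[o_1]-LB[o_1]$, else $o:=o_1$. (2) Add $o$ to $\mathcal E$ and its terminal child to $\mathcal G'$; for each AND child $a$ of $o$ with children $o_0,o_1$, add $a,o_0,o_1$ to $\mathcal G'$ and set $LB[o_0]:=h(o_0)$, $LB[o_1]:=h(o_1)$. (3) Starting from $Q=\{o\}$, repeatedly remove from $Q$ an OR node $u$ of maximal depth, compute $v=\min\{\min_a(\mathrm{cost}(u,a)+LB[a]),\mathrm{cost}(u,t_u)\}$ over the AND children $a$ and terminal child $t_u$ of $u$; if $v>LB[u]$, set $LB[u]:=v$ and add to $Q$ every OR node of $\mathcal G'$ that is the parent of an AND node of $\mathcal G'$ having $u$ as child. (4) The same with $UB$ in place of $LB$, updating when $v<UB[u]$. *)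

theory Defs
  imports "HOL-Analysis.Analysis"
begin

text \<open>Dataset: x_i in {0,1}^F for i in [N] = {1..N}, features f in [F] = {1..F};
  feature values and labels are encoded as bool (True = 1, False = 0).\<close>

record params =
  nN    :: nat
  nF    :: nat
  xs    :: "nat \<Rightarrow> nat \<Rightarrow> bool"   \<comment> \<open>xs i f = (x_i)_f\<close>
  ys    :: "nat \<Rightarrow> bool"
  rho1  :: real
  rho0  :: real
  alpha :: real
  beta  :: real

definition restr :: "params \<Rightarrow> nat set \<Rightarrow> nat \<Rightarrow> bool \<Rightarrow> nat set" where
  "restr P I f k = {i \<in> I. xs P i f = k}"

definition cnt :: "params \<Rightarrow> bool \<Rightarrow> nat set \<Rightarrow> nat" where
  "cnt P k I = card {i \<in> I. ys P i = k}"

definition Vset :: "params \<Rightarrow> nat set \<Rightarrow> nat set" where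
  "Vset P I = {f \<in> {1..nF P}. restr P I f False \<noteq> {} \<and> restr P I f True \<noteq> {}}"

definition ell_leaf :: "params \<Rightarrow> nat \<Rightarrow> nat \<Rightarrow> real" where
  "ell_leaf P c1 c0 = Beta (real c1 + rho1 P) (real c0 + rho0 P) / Beta (rho1 P) (rho0 P)"

definition p_split :: "params \<Rightarrow> nat \<Rightarrow> real" where
  "p_split P d = alpha P * (1 + real d) powr (- beta P)"

definition p_leaf :: "params \<Rightarrow> nat \<Rightarrow> nat set \<Rightarrow> real" where
  "p_leaf P d I = (if Vset P I = {} then 1 else 1 - p_split P d)"

definition p_inner :: "params \<Rightarrow> nat \<Rightarrow> nat set \<Rightarrow> real" where
  "p_inner P d I = (if Vset P I = {} then 0 else p_split P d / real (card (Vset P I)))"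

definition mlog :: "real \<Rightarrow> ereal" where
  "mlog x = (if x = 0 then \<infinity> else ereal (- ln x))"

datatype node =
    OrN "nat set" nat
  | AndN "nat set" nat nat
  | TermN "nat set" nat

fun is_or :: "node \<Rightarrow> bool" where
  "is_or (OrN _ _) = True" | "is_or _ = False"

fun is_and :: "node \<Rightarrow> bool" where
  "is_and (AndN _ _ _) = True" | "is_and _ = False"

fun is_term :: "node \<Rightarrow> bool" where
  "is_term (TermN _ _) = True" | "is_term _ = False"

fun depth :: "node \<Rightarrow> nat" where
  "depth (OrN _ d) = d" | "depth (AndN _ d _) = d" | "depth (TermN _ d) = d"

fun child0 :: "params \<Rightarrow> node \<Rightarrow> node" where
  "child0 P (AndN I d f) = OrN (restr P I f False) (Suc d)"
| "child0 P v = v"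

fun child1 :: "params \<Rightarrow> node \<Rightarrow> node" where
  "child1 P (AndN I d f) = OrN (restr P I f True) (Suc d)"
| "child1 P v = v"

inductive edge :: "params \<Rightarrow> node \<Rightarrow> node \<Rightarrow> bool" for P where
  or_term: "\<lbrakk>I \<noteq> {}; I \<subseteq> {1..nN P}; d \<le> nF P\<rbrakk> \<Longrightarrow> edge P (OrN I d) (TermN I d)"
| or_and: "\<lbrakk>I \<noteq> {}; I \<subseteq> {1..nN P}; d < nF P; f \<in> Vset P I\<rbrakk>
            \<Longrightarrow> edge P (OrN I d) (AndN I d f)"
| and_or0: "\<lbrakk>I \<noteq> {}; I \<subseteq> {1..nN P}; d < nF P; f \<in> Vset P I\<rbrakk>
            \<Longrightarrow> edge P (AndN I d f) (OrN (restr P I f False) (Suc d))"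
| and_or1: "\<lbrakk>I \<noteq> {}; I \<subseteq> {1..nN P}; d < nF P; f \<in> Vset P I\<rbrakk>
            \<Longrightarrow> edge P (AndN I d f) (OrN (restr P I f True) (Suc d))"

text \<open>Edge costs (only meaningful on edges).\<close>
fun ecost :: "params \<Rightarrow> node \<Rightarrow> node \<Rightarrow> ereal" where
  "ecost P (OrN I d) (TermN J e) =
     mlog (p_leaf P d I) + mlog (ell_leaf P (cnt P True I) (cnt P False I))"
| "ecost P (OrN I d) (AndN J e f) = mlog (p_inner P d I)"
| "ecost P _ _ = 0"

definition root :: "params \<Rightarrow> node" where
  "root P = OrN {1..nN P} 0"

definition Gnodes :: "params \<Rightarrow> node set" where
  "Gnodes P = {v. (edge P)\<^sup>*\<^sup>* (root P) v}"

definition Gedge :: "params \<Rightarrow> node \<Rightarrow> node \<Rightarrow> bool" where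
  "Gedge P v w \<longleftrightarrow> v \<in> Gnodes P \<and> w \<in> Gnodes P \<and> edge P v w"

definition psol :: "params \<Rightarrow> node \<Rightarrow> node set \<Rightarrow> bool" where
  "psol P u S \<longleftrightarrow>
     u \<in> S \<and> S \<subseteq> Gnodes P \<and>
     (\<forall>v\<in>S. (\<lambda>a b. a \<in> S \<and> b \<in> S \<and> Gedge P a b)\<^sup>*\<^sup>* u v) \<and>
     (\<forall>a\<in>S. is_and a \<longrightarrow> (\<forall>w. Gedge P a w \<longrightarrow> w \<in> S)) \<and>
     (\<forall>v\<in>S. is_or v \<longrightarrow> (\<exists>!w. w \<in> S \<and> Gedge P v w))"

definition scost :: "params \<Rightarrow> node set \<Rightarrow> ereal" where
  "scost P S = (\<Sum>e\<in>{(v, w). v \<in> S \<and> w \<in> S \<and> Gedge P v w}. ecost P (fst e) (snd e))"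

text \<open>True value of an OR node (minimum over the empty set is +\<infinity>).\<close>
definition fval :: "params \<Rightarrow> node \<Rightarrow> ereal" where
  "fval P u = (INF S \<in> {S. psol P u S}. scost P S)"

definition fvalA :: "params \<Rightarrow> node \<Rightarrow> ereal" where
  "fvalA P a = fval P (child0 P a) + fval P (child1 P a)"

fun hh :: "params \<Rightarrow> node \<Rightarrow> real" where
  "hh P (OrN I d) = - max (ln (ell_leaf P (cnt P True I) (cnt P False I)))
       (ln (p_split P d) + ln (ell_leaf P (cnt P True I) 0) + ln (ell_leaf P 0 (cnt P False I)))"
| "hh P _ = 0"

text \<open>Phase of the algorithm: selection (step 1, start of an iteration),
  LB propagation (step 3) with queue Q and expanded node ov, UB propagation (step 4).\<close>
datatype phase = Select | PropL "node set" node | PropU "node set"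

record state =
  Gp :: "node set"
  Ex :: "node set"
  LB :: "node \<Rightarrow> ereal"
  UB :: "node \<Rightarrow> ereal"
  ph :: phase

definition bndA :: "params \<Rightarrow> (node \<Rightarrow> ereal) \<Rightarrow> node \<Rightarrow> ereal" where
  "bndA P B a = B (child0 P a) + B (child1 P a)"

definition and_children :: "params \<Rightarrow> node \<Rightarrow> node set" where
  "and_children P u = {a. Gedge P u a \<and> is_and a}"

definition backup :: "params \<Rightarrow> (node \<Rightarrow> ereal) \<Rightarrow> node \<Rightarrow> ereal" where
  "backup P B u = Inf ((\<lambda>a. ecost P u a + bndA P B a) ` and_children P u
                       \<union> (\<lambda>t. ecost P u t) ` {t. Gedge P u t \<and> is_term t})"

definition parents_in :: "params \<Rightarrow> state \<Rightarrow> node \<Rightarrow> node set" where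
  "parents_in P s u = {p \<in> Gp s. is_or p \<and>
       (\<exists>a \<in> Gp s. is_and a \<and> Gedge P p a \<and> Gedge P a u)}"

inductive descend :: "params \<Rightarrow> state \<Rightarrow> node \<Rightarrow> node \<Rightarrow> bool" for P s where
  stop: "u \<notin> Ex s \<Longrightarrow> descend P s u u"
| down: "\<lbrakk>u \<in> Ex s; a \<in> and_children P u;
          \<forall>a' \<in> and_children P u. ecost P u a + bndA P (LB s) a \<le> ecost P u a' + bndA P (LB s) a';
          nxt = (if UB s (child0 P a) - LB s (child0 P a) > UB s (child1 P a) - LB s (child1 P a)
                 then child0 P a else child1 P a);
          descend P s nxt ov\<rbrakk> \<Longrightarrow> descend P s u ov"

definition expand :: "params \<Rightarrow> state \<Rightarrow> node \<Rightarrow> state" where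
  "expand P s ov =
    (let new = {w. \<exists>a \<in> and_children P ov. Gedge P a w} in
     s\<lparr> Ex := Ex s \<union> {ov},
        Gp := Gp s \<union> {t. Gedge P ov t \<and> is_term t} \<union> and_children P ov \<union> new,
        LB := (\<lambda>v. if v \<in> new then ereal (hh P v) else LB s v),
        ph := PropL {ov} ov \<rparr>)"

inductive mstep :: "params \<Rightarrow> state \<Rightarrow> state \<Rightarrow> bool" for P where
  iterate: "\<lbrakk>ph s = Select; LB s (root P) < UB s (root P); descend P s (root P) ov\<rbrakk>
            \<Longrightarrow> mstep P s (expand P s ov)"
| lb_up: "\<lbrakk>ph s = PropL Q ov; u \<in> Q; \<forall>u' \<in> Q. depth u' \<le> depth u;
           backup P (LB s) u > LB s u\<rbrakk>
          \<Longrightarrow> mstep P s (s\<lparr> LB := (LB s)(u := backup P (LB s) u),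
                              ph := PropL (Q - {u} \<union> parents_in P s u) ov \<rparr>)"
| lb_keep: "\<lbrakk>ph s = PropL Q ov; u \<in> Q; \<forall>u' \<in> Q. depth u' \<le> depth u;
           \<not> backup P (LB s) u > LB s u\<rbrakk>
          \<Longrightarrow> mstep P s (s\<lparr> ph := PropL (Q - {u}) ov \<rparr>)"
| lb_done: "ph s = PropL {} ov \<Longrightarrow> mstep P s (s\<lparr> ph := PropU {ov} \<rparr>)"
| ub_up: "\<lbrakk>ph s = PropU Q; u \<in> Q; \<forall>u' \<in> Q. depth u' \<le> depth u;
           backup P (UB s) u < UB s u\<rbrakk>
          \<Longrightarrow> mstep P s (s\<lparr> UB := (UB s)(u := backup P (UB s) u),
                              ph := PropU (Q - {u} \<union> parents_in P s u) \<rparr>)"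
| ub_keep: "\<lbrakk>ph s = PropU Q; u \<in> Q; \<forall>u' \<in> Q. depth u' \<le> depth u;
           \<not> backup P (UB s) u < UB s u\<rbrakk>
          \<Longrightarrow> mstep P s (s\<lparr> ph := PropU (Q - {u}) \<rparr>)"
| ub_done: "ph s = PropU {} \<Longrightarrow> mstep P s (s\<lparr> ph := Select \<rparr>)"

text \<open>Initial state; LB values at nodes other than the root are unassigned (arbitrary).\<close>
definition init_state :: "params \<Rightarrow> state \<Rightarrow> bool" where
  "init_state P s \<longleftrightarrow> Gp s = {root P} \<and> Ex s = {} \<and> LB s (root P) = ereal (hh P (root P))
     \<and> UB s = (\<lambda>_. \<infinity>) \<and> ph s = Select"

end

(*
  The heuristic is admissible. Let pure_cost I = -ln l(c1(I),0) - ln l(0,c0(I)) be the cost of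
  splitting I into its positive and negative samples without paying for the splits. Since
  Beta(x+n,y)/Beta(x,y) is the product over i < n of (x+i)/(x+y+i), we have
  l(a,b) <= l(a,0) l(0,b), and l(.,0) and l(0,.) are supermultiplicative. So pure_cost is
  subadditive under splits and lies below every leaf cost. Induction on the depth then gives
  pure_cost I <= f(o_{I,d}), and one more split step gives h <= f.

  Backups are sound because f satisfies the Bellman inequality: f(u) is at least the minimum over
  the children of u of the edge cost plus the value of the child. A partial solution through an
  AND node contains partial solutions for both children. Edge costs are nonnegative, so its cost
  is at least the sum of theirs. The backup of step (3) is monotone in the bounds of the AND
  children, and the invariant ensures those bounds are already sound whenever u is backed up.
*)

theory Submission
  imports Defs
begin

section \<open>Leaf likelihoods\<close>

lemma Beta_add_nat_left:
  assumes "x > 0" "y > (0::real)"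
  shows "Beta (x + real n) y = Beta x y * (\<Prod>i<n. (x + real i) / (x + y + real i))"
proof (induction n)
  case (Suc n)
  have "x + real n \<notin> \<int>\<^sub>\<le>\<^sub>0"
    using assms nonpos_Ints_nonpos by fastforce
  from Beta_plus1_left[OF this, of y] assms
  have "Beta (x + real n + 1) y = Beta (x + real n) y * ((x + real n) / (x + y + real n))"
    by (simp add: field_simps)
  with Suc show ?case by (simp add: add_ac)
qed simp

lemma prod_lessThan_add_ge:
  fixes g :: "nat \<Rightarrow> 'a::linordered_semidom"
  assumes "mono g" "\<And>i. 0 \<le> g i"
  shows "prod g {..<m} * prod g {..<n} \<le> prod g {..<m + n}"
proof (induction n)
  case (Suc n)
  have "prod g {..<m} * prod g {..<Suc n} = (prod g {..<m} * prod g {..<n}) * g n"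
    by (simp add: mult.assoc)
  also have "\<dots> \<le> prod g {..<m + n} * g (m + n)"
    using Suc assms by (intro mult_mono monoD[OF assms(1)]) (auto intro: prod_nonneg)
  finally show ?case by simp
qed simp

lemma mono_ratio_shift:
  assumes "c > 0" "e > (0::real)"
  shows "mono (\<lambda>i::nat. (c + i) / (c + e + i))"
  using assms by (intro monoI) (simp add: field_simps mult_left_mono)

definition pure_cost :: "params \<Rightarrow> nat set \<Rightarrow> real" where
  "pure_cost P I = - ln (ell_leaf P (cnt P True I) 0) - ln (ell_leaf P 0 (cnt P False I))"

lemma cnt_restr_split:
  assumes "finite I"
  shows "cnt P k I = cnt P k (restr P I f False) + cnt P k (restr P I f True)"
proof -
  have "{i \<in> I. ys P i = k} = {i \<in> restr P I f False. ys P i = k} \<union> {i \<in> restr P I f True. ys P i = k}"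
    by (auto simp: restr_def)
  with assms show ?thesis
    unfolding cnt_def by (subst card_Un_disjoint[symmetric]) (auto simp: restr_def)
qed

locale leaf_prior =
  fixes P :: params
  assumes rho1_pos: "rho1 P > 0" and rho0_pos: "rho0 P > 0"
begin

lemma ell_leaf_prod:
  "ell_leaf P a b = (\<Prod>i<a. (rho1 P + real i) / (rho1 P + rho0 P + real b + real i))
                  * (\<Prod>j<b. (rho0 P + real j) / (rho1 P + rho0 P + real j))"
proof -
  have pos: "rho0 P + real b > 0" using rho0_pos by simp
  have "Beta (rho1 P) (rho0 P + real b) = Beta (rho0 P + real b) (rho1 P)"
    by (rule Beta_commute)
  also have "\<dots> = Beta (rho1 P) (rho0 P) * (\<Prod>j<b. (rho0 P + real j) / (rho1 P + rho0 P + real j))"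
    using Beta_add_nat_left[OF rho0_pos rho1_pos, of b] by (simp add: Beta_commute add_ac)
  finally have "Beta (rho1 P) (rho0 P + real b)
      = Beta (rho1 P) (rho0 P) * (\<Prod>j<b. (rho0 P + real j) / (rho1 P + rho0 P + real j))" .
  moreover have "Beta (rho1 P) (rho0 P) > 0"
    using rho1_pos rho0_pos by (simp add: Beta_def)
  ultimately show ?thesis
    unfolding ell_leaf_def using Beta_add_nat_left[OF rho1_pos pos, of a]
    by (simp add: add_ac)
qed

lemma ell_leaf_pos: "ell_leaf P a b > 0"
  unfolding ell_leaf_prod using rho1_pos rho0_pos
  by (intro mult_pos_pos prod_pos) auto

lemma ell_leaf_le_1: "ell_leaf P a b \<le> 1"
  unfolding ell_leaf_prod using rho1_pos rho0_pos
  by (intro mult_le_one prod_le_1 prod_nonneg) auto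

lemma ell_leaf_le_mult: "ell_leaf P a b \<le> ell_leaf P a 0 * ell_leaf P 0 b"
proof -
  have "(\<Prod>i<a. (rho1 P + real i) / (rho1 P + rho0 P + real b + real i))
      \<le> (\<Prod>i<a. (rho1 P + real i) / (rho1 P + rho0 P + real i))"
    using rho1_pos rho0_pos by (intro prod_mono) (auto intro: divide_left_mono)
  then show ?thesis
    unfolding ell_leaf_prod using rho1_pos rho0_pos
    by (auto intro!: mult_right_mono prod_nonneg)
qed

lemma ell_leaf_supermult:
  "ell_leaf P a0 0 * ell_leaf P a1 0 \<le> ell_leaf P (a0 + a1) 0"
  "ell_leaf P 0 b0 * ell_leaf P 0 b1 \<le> ell_leaf P 0 (b0 + b1)"
proof -
  have "mono (\<lambda>i::nat. (rho1 P + real i) / (rho1 P + rho0 P + real i))"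
    using mono_ratio_shift[OF rho1_pos rho0_pos] by (simp add: add_ac)
  with rho1_pos rho0_pos show "ell_leaf P a0 0 * ell_leaf P a1 0 \<le> ell_leaf P (a0 + a1) 0"
    unfolding ell_leaf_prod by (simp add: prod_lessThan_add_ge)
  have "mono (\<lambda>j::nat. (rho0 P + real j) / (rho1 P + rho0 P + real j))"
    using mono_ratio_shift[OF rho0_pos rho1_pos] by (simp add: add_ac)
  with rho1_pos rho0_pos show "ell_leaf P 0 b0 * ell_leaf P 0 b1 \<le> ell_leaf P 0 (b0 + b1)"
    unfolding ell_leaf_prod by (simp add: prod_lessThan_add_ge)
qed

lemma ln_ell_leaf_supermult:
  "ln (ell_leaf P a0 0) + ln (ell_leaf P a1 0) \<le> ln (ell_leaf P (a0 + a1) 0)"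
  "ln (ell_leaf P 0 b0) + ln (ell_leaf P 0 b1) \<le> ln (ell_leaf P 0 (b0 + b1))"
  using ell_leaf_supermult(1)[of a0 a1] ell_leaf_supermult(2)[of b0 b1] ell_leaf_pos
  by (simp_all add: ln_mult_pos[symmetric])

lemma pure_cost_subadditive:
  assumes "finite I"
  shows "pure_cost P I \<le> pure_cost P (restr P I f False) + pure_cost P (restr P I f True)"
  using ln_ell_leaf_supermult(1)[of "cnt P True (restr P I f False)" "cnt P True (restr P I f True)"]
    ln_ell_leaf_supermult(2)[of "cnt P False (restr P I f False)" "cnt P False (restr P I f True)"]
    cnt_restr_split[OF assms, of _ _ f]
  by (simp add: pure_cost_def)

lemma pure_cost_le_leaf: "pure_cost P I \<le> - ln (ell_leaf P (cnt P True I) (cnt P False I))"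
proof -
  have "ln (ell_leaf P (cnt P True I) (cnt P False I))
      \<le> ln (ell_leaf P (cnt P True I) 0 * ell_leaf P 0 (cnt P False I))"
    using ell_leaf_le_mult ell_leaf_pos by (simp add: mult_pos_pos)
  then show ?thesis
    using ell_leaf_pos by (simp add: pure_cost_def ln_mult_pos)
qed

end

section \<open>The AND/OR graph and its partial solutions\<close>

lemma edge_OrN_iff: "edge P (OrN I d) w \<longleftrightarrow>
   I \<noteq> {} \<and> I \<subseteq> {1..nN P} \<and>
   (d \<le> nF P \<and> w = TermN I d \<or> (\<exists>f \<in> Vset P I. d < nF P \<and> w = AndN I d f))"
  by (blast elim: edge.cases intro: edge.intros)

lemma edge_AndN_iff: "edge P (AndN I d f) w \<longleftrightarrow>
   I \<noteq> {} \<and> I \<subseteq> {1..nN P} \<and> d < nF P \<and> f \<in> Vset P I \<and>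
   (w = OrN (restr P I f False) (Suc d) \<or> w = OrN (restr P I f True) (Suc d))"
  by (blast elim: edge.cases intro: edge.intros)

lemma edge_to_AndN: "edge P v (AndN I d f) \<Longrightarrow> v = OrN I d"
  by (auto elim: edge.cases)

lemma restr_subset: "restr P I f k \<subseteq> I"
  by (auto simp: restr_def)

lemma restr_nonempty: "f \<in> Vset P I \<Longrightarrow> restr P I f k \<noteq> {}"
  by (cases k) (auto simp: Vset_def)

fun sample_set :: "node \<Rightarrow> nat set" where
  "sample_set (OrN I _) = I" | "sample_set (AndN I _ _) = I" | "sample_set (TermN I _) = I"

lemma edge_sample_set_depth:
  "edge P v w \<Longrightarrow> sample_set w \<noteq> {} \<and> sample_set w \<subseteq> sample_set v \<and> depth v \<le> depth w"
  by (induction rule: edge.induct) (auto simp: restr_subset restr_nonempty)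

lemma rtranclp_edge_sample_set_depth:
  "(edge P)\<^sup>*\<^sup>* v w \<Longrightarrow> sample_set v \<noteq> {} \<Longrightarrow>
     sample_set w \<noteq> {} \<and> sample_set w \<subseteq> sample_set v \<and> depth v \<le> depth w"
  by (induction rule: rtranclp_induct) (fastforce dest: edge_sample_set_depth)+

lemma Gnodes_edge: "v \<in> Gnodes P \<Longrightarrow> edge P v w \<Longrightarrow> w \<in> Gnodes P"
  by (auto simp: Gnodes_def)

lemma finite_Gnodes: "finite (Gnodes P)"
proof -
  define U where "U = Pow {1..nN P} \<times> {..nF P}"
  define V where "V = (\<lambda>(I, d). OrN I d) ` U \<union> (\<lambda>(I, d). TermN I d) ` U
                    \<union> (\<lambda>((I, d), f). AndN I d f) ` (U \<times> {..nF P})"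
  have target: "w \<in> V" if "edge P v w" for v w
    using that
  proof (induction rule: edge.induct)
    case (or_and I d f)
    then have "((I, d), f) \<in> U \<times> {..nF P}" by (auto simp: U_def Vset_def)
    then show ?case unfolding V_def by (intro UnI2) force
  qed (use restr_subset in \<open>fastforce simp: U_def V_def\<close>)+
  have "Gnodes P \<subseteq> insert (root P) V"
    by (auto simp: Gnodes_def elim: rtranclp.cases dest: target)
  moreover have "finite V" by (simp add: U_def V_def)
  ultimately show ?thesis by (meson finite_insert finite_subset)
qed

lemma and_children_edges:
  assumes "a \<in> and_children P p"
  shows "Gedge P a (child0 P a) \<and> Gedge P a (child1 P a) \<and> is_or (child0 P a) \<and> is_or (child1 P a)"
proof -
  obtain I d f where a: "a = AndN I d f"
    using assms by (cases a) (auto simp: and_children_def)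
  have e: "edge P p a" "a \<in> Gnodes P" using assms by (auto simp: and_children_def Gedge_def)
  then have "p = OrN I d" by (simp add: a edge_to_AndN)
  with e(1) have "edge P a (child0 P a)" "edge P a (child1 P a)"
    by (auto simp: a edge_AndN_iff edge_OrN_iff)
  with e(2) show ?thesis by (auto simp: a Gedge_def intro: Gnodes_edge)
qed

lemma and_children_unique_parent: "Gedge P p a \<Longrightarrow> a \<in> and_children P p' \<Longrightarrow> p = p'"
  by (cases a) (auto simp: and_children_def Gedge_def dest: edge_to_AndN)

definition Gedge_within :: "params \<Rightarrow> node set \<Rightarrow> node \<Rightarrow> node \<Rightarrow> bool" where
  "Gedge_within P S v w \<longleftrightarrow> v \<in> S \<and> w \<in> S \<and> Gedge P v w"

definition reach_within :: "params \<Rightarrow> node set \<Rightarrow> node \<Rightarrow> node set" where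
  "reach_within P S x = {v. (Gedge_within P S)\<^sup>*\<^sup>* x v}"

lemma psol_iff: "psol P u S \<longleftrightarrow>
     u \<in> S \<and> S \<subseteq> Gnodes P \<and>
     (\<forall>v\<in>S. (Gedge_within P S)\<^sup>*\<^sup>* u v) \<and>
     (\<forall>a\<in>S. is_and a \<longrightarrow> (\<forall>w. Gedge P a w \<longrightarrow> w \<in> S)) \<and>
     (\<forall>v\<in>S. is_or v \<longrightarrow> (\<exists>!w. w \<in> S \<and> Gedge P v w))"
  unfolding psol_def Gedge_within_def[abs_def] ..

lemma psolD:
  assumes "psol P u S"
  shows "u \<in> S" "S \<subseteq> Gnodes P" "\<And>v. v \<in> S \<Longrightarrow> (Gedge_within P S)\<^sup>*\<^sup>* u v"
    "\<And>a w. a \<in> S \<Longrightarrow> is_and a \<Longrightarrow> Gedge P a w \<Longrightarrow> w \<in> S"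
    "\<And>v. v \<in> S \<Longrightarrow> is_or v \<Longrightarrow> \<exists>!w. w \<in> S \<and> Gedge P v w"
  using assms unfolding psol_iff by simp_all

lemma reach_within_subset: "x \<in> S \<Longrightarrow> reach_within P S x \<subseteq> S"
  unfolding reach_within_def by (auto elim: rtranclp.cases simp: Gedge_within_def)

lemma rtranclp_Gedge_within_edge: "(Gedge_within P S)\<^sup>*\<^sup>* x v \<Longrightarrow> (edge P)\<^sup>*\<^sup>* x v"
  by (induction rule: rtranclp_induct) (auto simp: Gedge_within_def Gedge_def)

lemma Gedge_within_reach_within:
  "(Gedge_within P S)\<^sup>*\<^sup>* x v \<Longrightarrow> (Gedge_within P (reach_within P S x))\<^sup>*\<^sup>* x v"
proof (induction rule: rtranclp_induct)
  case (step v w)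
  then have "v \<in> reach_within P S x" "w \<in> reach_within P S x"
    by (auto simp: reach_within_def)
  with step show ?case
    by (auto simp: Gedge_within_def intro: rtranclp.rtrancl_into_rtrancl)
qed simp

lemma psol_reach_within:
  assumes "psol P u S" "x \<in> S"
  shows "psol P x (reach_within P S x)"
proof -
  let ?R = "reach_within P S x"
  have sub: "?R \<subseteq> S" using assms(2) by (rule reach_within_subset)
  have closed: "w \<in> ?R" if "v \<in> ?R" "w \<in> S" "Gedge P v w" for v w
  proof -
    have "Gedge_within P S v w" using that sub by (auto simp: Gedge_within_def)
    with \<open>v \<in> ?R\<close> show ?thesis
      unfolding reach_within_def by (simp add: rtranclp.rtrancl_into_rtrancl)
  qed
  show ?thesis
    unfolding psol_iff
  proof (intro conjI ballI impI allI)
    show "x \<in> ?R" by (simp add: reach_within_def)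
    show "?R \<subseteq> Gnodes P" using sub psolD(2)[OF assms(1)] by blast
  next
    fix v assume "v \<in> ?R"
    then have "(Gedge_within P S)\<^sup>*\<^sup>* x v" by (simp add: reach_within_def)
    then show "(Gedge_within P ?R)\<^sup>*\<^sup>* x v" by (rule Gedge_within_reach_within)
  next
    fix a w assume "a \<in> ?R" "is_and a" "Gedge P a w"
    moreover have "a \<in> S" using \<open>a \<in> ?R\<close> sub by blast
    ultimately show "w \<in> ?R" using closed psolD(4)[OF assms(1)] by blast
  next
    fix v assume v: "v \<in> ?R" "is_or v"
    have "v \<in> S" using v(1) sub by blast
    then obtain w where w: "w \<in> S" "Gedge P v w"
      and uniq: "\<And>w'. w' \<in> S \<Longrightarrow> Gedge P v w' \<Longrightarrow> w' = w"
      using psolD(5)[OF assms(1) _ v(2)] by metis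
    show "\<exists>!w. w \<in> ?R \<and> Gedge P v w"
    proof (rule ex1I[of _ w])
      show "w \<in> ?R \<and> Gedge P v w" using closed[OF v(1) w] w(2) by blast
    qed (use uniq sub in blast)
  qed
qed

definition sol_edges :: "params \<Rightarrow> node set \<Rightarrow> (node \<times> node) set" where
  "sol_edges P S = {(v, w). Gedge_within P S v w}"

lemma scost_sol_edges: "scost P S = (\<Sum>e\<in>sol_edges P S. ecost P (fst e) (snd e))"
  by (simp add: scost_def sol_edges_def Gedge_within_def)

lemma finite_sol_edges: "psol P u S \<Longrightarrow> finite (sol_edges P S)"
proof -
  assume "psol P u S"
  then have "finite S" using finite_Gnodes by (blast intro: finite_subset dest: psolD(2))
  then have "finite (S \<times> S)" by simp
  then show ?thesis
    by (rule finite_subset[rotated]) (auto simp: sol_edges_def Gedge_within_def)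
qed

section \<open>The Bellman inequality and admissibility of the heuristic\<close>

lemma backup_mono:
  assumes "\<And>a. a \<in> and_children P u \<Longrightarrow> bndA P B a \<le> bndA P B' a"
  shows "backup P B u \<le> backup P B' u"
  unfolding backup_def Inf_union_distrib
  by (intro inf_mono INF_superset_mono add_left_mono order_refl subset_refl) (simp_all add: assms)

lemma mlog_nonneg: "0 \<le> x \<Longrightarrow> x \<le> 1 \<Longrightarrow> 0 \<le> mlog x"
  by (simp add: mlog_def)

lemma mlog_pos: "0 < x \<Longrightarrow> mlog x = ereal (- ln x)"
  by (simp add: mlog_def)

locale tree_prior = leaf_prior +
  assumes alpha_pos: "0 < alpha P" and alpha_lt_1: "alpha P < 1" and beta_nonneg: "beta P \<ge> 0"
begin

lemma p_split_bounds: "0 < p_split P d" "p_split P d < 1"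
proof -
  have "1 \<le> (1 + real d) powr beta P"
    using beta_nonneg by (intro ge_one_powr_ge_zero) auto
  then have "0 < (1 + real d) powr (- beta P)" "(1 + real d) powr (- beta P) \<le> 1"
    by (simp_all add: powr_minus inverse_le_1_iff)
  with alpha_pos alpha_lt_1 show "0 < p_split P d" "p_split P d < 1"
    unfolding p_split_def by (simp, smt (verit) mult_left_le)
qed

lemma p_leaf_bounds: "0 < p_leaf P d I" "p_leaf P d I \<le> 1"
  using p_split_bounds[of d] by (simp_all add: p_leaf_def)

lemma p_inner_bounds:
  assumes "f \<in> Vset P I"
  shows "0 < p_inner P d I" "p_inner P d I \<le> p_split P d"
proof -
  have "real (card (Vset P I)) \<ge> 1"
    using assms by (simp add: Suc_le_eq card_gt_0_iff Vset_def) blast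
  then show "0 < p_inner P d I" "p_inner P d I \<le> p_split P d"
    using assms p_split_bounds[of d] by (auto simp: p_inner_def divide_le_eq)
qed

lemma ln_p_leaf_nonpos: "ln (p_leaf P d I) \<le> 0"
  using p_leaf_bounds[of d I] by simp

lemma ln_p_split_nonpos: "ln (p_split P d) \<le> 0"
  using p_split_bounds[of d] by simp

lemma ln_p_inner_le: "f \<in> Vset P I \<Longrightarrow> ln (p_inner P d I) \<le> ln (p_split P d)"
  using p_inner_bounds[of f I d] by simp

lemma ecost_nonneg: "0 \<le> ecost P v w"
proof -
  have "0 \<le> p_inner P d I \<and> p_inner P d I \<le> 1" for d I
    using p_inner_bounds[of _ I d] p_split_bounds[of d]
    by (cases "Vset P I = {}") (auto simp: p_inner_def)
  then show ?thesis
    using less_imp_le[OF p_leaf_bounds(1)] p_leaf_bounds(2) less_imp_le[OF ell_leaf_pos] ell_leaf_le_1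
    by (cases v; cases w) (auto intro!: add_nonneg_nonneg mlog_nonneg)
qed

lemma scost_ge_sum:
  assumes "psol P u S" "X \<subseteq> sol_edges P S"
  shows "(\<Sum>e\<in>X. ecost P (fst e) (snd e)) \<le> scost P S"
  unfolding scost_sol_edges
  using assms by (intro sum_mono2) (auto simp: finite_sol_edges ecost_nonneg)

lemma sol_edges_mono: "S \<subseteq> T \<Longrightarrow> sol_edges P S \<subseteq> sol_edges P T"
  by (auto simp: sol_edges_def Gedge_within_def)

lemma sol_edges_disjoint: "S \<inter> T = {} \<Longrightarrow> sol_edges P S \<inter> sol_edges P T = {}"
  by (auto simp: sol_edges_def Gedge_within_def)

lemma reach_within_sample_set_depth:
  assumes "v \<in> reach_within P S x" "sample_set x \<noteq> {}"
  shows "sample_set v \<noteq> {} \<and> sample_set v \<subseteq> sample_set x \<and> depth x \<le> depth v"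
proof -
  have "(edge P)\<^sup>*\<^sup>* x v"
    using assms(1) rtranclp_Gedge_within_edge by (simp add: reach_within_def)
  then show ?thesis using assms(2) by (rule rtranclp_edge_sample_set_depth)
qed

text \<open>Disjointness comes from the disjoint sample sets of the two children, and u is missing from
  both subsolutions because they lie strictly deeper than u.\<close>

lemma psol_split_at_and_child:
  assumes ps: "psol P u S" and a: "a \<in> S" "Gedge P u a" "is_and a"
  obtains S0 S1 where "psol P (child0 P a) S0" "psol P (child1 P a) S1"
    "S0 \<subseteq> S" "S1 \<subseteq> S" "S0 \<inter> S1 = {}" "u \<notin> S0 \<union> S1"
proof -
  obtain I d f where a_eq: "a = AndN I d f" using a(3) by (cases a) auto
  have u_eq: "u = OrN I d" using a(2) by (auto simp: Gedge_def a_eq dest: edge_to_AndN)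
  have f: "f \<in> Vset P I" using a(2) by (auto simp: Gedge_def a_eq u_eq edge_OrN_iff)
  define ch where "ch k = OrN (restr P I f k) (Suc d)" for k
  define S' where "S' k = reach_within P S (ch k)" for k
  have ch_in: "ch k \<in> S" for k
  proof -
    have "edge P a (ch k)"
      using a(2) by (cases k) (auto simp: Gedge_def a_eq u_eq edge_OrN_iff edge_AndN_iff ch_def)
    then have "Gedge P a (ch k)" using a(1) ps by (auto simp: Gedge_def dest: psolD(2) Gnodes_edge)
    then show ?thesis using psolD(4)[OF ps a(1,3)] by blast
  qed
  have below: "sample_set v \<noteq> {} \<and> sample_set v \<subseteq> restr P I f k \<and> Suc d \<le> depth v"
    if "v \<in> S' k" for v k
    using reach_within_sample_set_depth[OF that[unfolded S'_def]] restr_nonempty[OF f]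
    by (simp add: ch_def)
  show ?thesis
  proof (rule that)
    show "psol P (child0 P a) (S' False)" "psol P (child1 P a) (S' True)"
      unfolding S'_def using psol_reach_within[OF ps ch_in] by (simp_all add: a_eq ch_def)
    show "S' False \<subseteq> S" "S' True \<subseteq> S"
      unfolding S'_def using ch_in by (simp_all add: reach_within_subset)
    show "S' False \<inter> S' True = {}"
      using below[of _ False] below[of _ True] by (fastforce simp: restr_def)
    show "u \<notin> S' False \<union> S' True"
      using below[of u] by (auto simp: u_eq)
  qed
qed

lemma scost_ge_and_child:
  assumes ps: "psol P u S" and a: "a \<in> S" "Gedge P u a" "is_and a"
  shows "ecost P u a + fvalA P a \<le> scost P S"
proof -
  obtain S0 S1 where ps': "psol P (child0 P a) S0" "psol P (child1 P a) S1"
    and sub: "S0 \<subseteq> S" "S1 \<subseteq> S" and disj: "S0 \<inter> S1 = {}" and fresh: "u \<notin> S0 \<union> S1"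
    using psol_split_at_and_child[OF assms] .
  have "(u, a) \<notin> sol_edges P S0 \<union> sol_edges P S1"
    using fresh by (auto simp: sol_edges_def Gedge_within_def)
  moreover have "(u, a) \<in> sol_edges P S"
    using psolD(1)[OF ps] a(1,2) by (simp add: sol_edges_def Gedge_within_def)
  moreover note sol_edges_disjoint[OF disj] sol_edges_mono[OF sub(1)] sol_edges_mono[OF sub(2)]
    finite_sol_edges[OF ps'(1)] finite_sol_edges[OF ps'(2)]
  ultimately have split: "ecost P u a + scost P S0 + scost P S1 \<le> scost P S"
    using scost_ge_sum[OF ps, of "insert (u, a) (sol_edges P S0 \<union> sol_edges P S1)"]
    by (simp add: scost_sol_edges sum.union_disjoint add.assoc)
  have "fval P (child0 P a) \<le> scost P S0" "fval P (child1 P a) \<le> scost P S1"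
    using ps' unfolding fval_def by (auto intro: INF_lower)
  then have "ecost P u a + fvalA P a \<le> ecost P u a + scost P S0 + scost P S1"
    unfolding fvalA_def add.assoc by (intro add_mono order_refl)
  with split show ?thesis by order
qed

lemma scost_ge_backup:
  assumes ps: "psol P u S" and "is_or u"
  shows "backup P (fval P) u \<le> scost P S"
proof -
  have "\<exists>w. w \<in> S \<and> Gedge P u w"
    using psolD(5)[OF ps psolD(1)[OF ps] assms(2)] by (rule ex1_implies_ex)
  then obtain w where w: "w \<in> S" "Gedge P u w" by blast
  obtain I d where u_eq: "u = OrN I d" using assms(2) by (cases u) auto
  have "is_term w \<or> is_and w"
    using w(2) by (auto simp: Gedge_def u_eq edge_OrN_iff)
  then show ?thesis
  proof
    assume "is_term w"
    then have "backup P (fval P) u \<le> ecost P u w"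
      unfolding backup_def using w(2) by (intro Inf_lower) blast
    also have "\<dots> \<le> scost P S"
      using scost_ge_sum[OF ps, of "{(u, w)}"] w psolD(1)[OF ps]
      by (simp add: sol_edges_def Gedge_within_def)
    finally show ?thesis .
  next
    assume "is_and w"
    then have "backup P (fval P) u \<le> ecost P u w + bndA P (fval P) w"
      unfolding backup_def and_children_def using w(2) by (intro Inf_lower) blast
    also have "\<dots> \<le> scost P S"
      using scost_ge_and_child[OF ps w \<open>is_and w\<close>] by (simp add: bndA_def fvalA_def)
    finally show ?thesis .
  qed
qed

lemma fval_ge_backup: "is_or u \<Longrightarrow> backup P (fval P) u \<le> fval P u"
  unfolding fval_def[of P u] using scost_ge_backup by (auto intro: INF_greatest)

lemma le_backup_OrN:
  assumes leaf: "x \<le> ereal (- ln (p_leaf P d I) - ln (ell_leaf P (cnt P True I) (cnt P False I)))"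
    and split: "\<And>f. f \<in> Vset P I \<Longrightarrow> finite I \<Longrightarrow> d < nF P \<Longrightarrow>
      x \<le> ereal (- ln (p_inner P d I)) + B (OrN (restr P I f False) (Suc d)) + B (OrN (restr P I f True) (Suc d))"
  shows "x \<le> backup P B (OrN I d)"
  unfolding backup_def
proof (rule Inf_greatest)
  fix y
  assume "y \<in> (\<lambda>a. ecost P (OrN I d) a + bndA P B a) ` and_children P (OrN I d)
            \<union> ecost P (OrN I d) ` {t. Gedge P (OrN I d) t \<and> is_term t}"
  then consider (inner) a where "a \<in> and_children P (OrN I d)" "y = ecost P (OrN I d) a + bndA P B a"
    | (leaf) t where "Gedge P (OrN I d) t" "is_term t" "y = ecost P (OrN I d) t"
    by blast
  then show "x \<le> y"
  proof cases
    case inner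
    then obtain f where f: "a = AndN I d f" "f \<in> Vset P I" "I \<subseteq> {1..nN P}" "d < nF P"
      unfolding and_children_def Gedge_def edge_OrN_iff by auto
    then have "finite I" by (auto intro: finite_subset)
    with inner f show ?thesis
      using split p_inner_bounds by (simp add: bndA_def mlog_pos add.assoc)
  next
    case leaf
    then have "t = TermN I d" by (auto simp: Gedge_def edge_OrN_iff)
    with leaf show ?thesis
      using assms(1) p_leaf_bounds ell_leaf_pos by (simp add: mlog_pos)
  qed
qed

lemma pure_cost_le_fval: "ereal (pure_cost P I) \<le> fval P (OrN I d)"
proof (induction "nF P - d" arbitrary: I d rule: less_induct)
  case less
  have "ereal (pure_cost P I) \<le> backup P (fval P) (OrN I d)"
  proof (rule le_backup_OrN)
    show "ereal (pure_cost P I) \<le> ereal (- ln (p_leaf P d I) - ln (ell_leaf P (cnt P True I) (cnt P False I)))"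
      using pure_cost_le_leaf[of I] ln_p_leaf_nonpos[of d I] by simp
  next
    fix f assume f: "f \<in> Vset P I" "finite I" "d < nF P"
    have "ereal (pure_cost P I)
        \<le> ereal (- ln (p_inner P d I)) + ereal (pure_cost P (restr P I f False)) + ereal (pure_cost P (restr P I f True))"
      using pure_cost_subadditive[OF f(2), of f] ln_p_inner_le[OF f(1), of d] ln_p_split_nonpos[of d]
      by simp
    also have "\<dots> \<le> ereal (- ln (p_inner P d I)) + fval P (OrN (restr P I f False) (Suc d))
                    + fval P (OrN (restr P I f True) (Suc d))"
      using f(3) by (intro add_mono order_refl less.hyps) auto
    finally show "ereal (pure_cost P I) \<le> \<dots>" .
  qed
  also have "\<dots> \<le> fval P (OrN I d)"
    by (simp add: fval_ge_backup)
  finally show ?case .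
qed

lemma hh_le_fval:
  assumes "is_or u"
  shows "ereal (hh P u) \<le> fval P u"
proof -
  obtain I d where u: "u = OrN I d" using assms by (cases u) auto
  have hh_eq: "hh P u = min (- ln (ell_leaf P (cnt P True I) (cnt P False I))) (- ln (p_split P d) + pure_cost P I)"
    by (simp add: u pure_cost_def minus_max_eq_min)
  have "ereal (hh P u) \<le> backup P (fval P) u"
    unfolding u
  proof (rule le_backup_OrN)
    show "ereal (hh P (OrN I d)) \<le> ereal (- ln (p_leaf P d I) - ln (ell_leaf P (cnt P True I) (cnt P False I)))"
      using hh_eq ln_p_leaf_nonpos[of d I] by (simp add: u del: ereal_min)
  next
    fix f assume f: "f \<in> Vset P I" "finite I" "d < nF P"
    have "ereal (hh P (OrN I d))
        \<le> ereal (- ln (p_inner P d I)) + ereal (pure_cost P (restr P I f False)) + ereal (pure_cost P (restr P I f True))"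
      using hh_eq pure_cost_subadditive[OF f(2), of f] ln_p_inner_le[OF f(1), of d]
      by (simp add: u del: ereal_min)
    also have "\<dots> \<le> ereal (- ln (p_inner P d I)) + fval P (OrN (restr P I f False) (Suc d))
                    + fval P (OrN (restr P I f True) (Suc d))"
      by (intro add_mono order_refl pure_cost_le_fval)
    finally show "ereal (hh P (OrN I d)) \<le> \<dots>" .
  qed
  also have "\<dots> \<le> fval P u"
    using assms by (rule fval_ge_backup)
  finally show ?thesis .
qed

end

section \<open>The invariant of MAPTree\<close>

text \<open>The structural conjuncts ensure that a node backed up in step (3) is expanded, so its AND
  children and their children are in G' and the backup reads only sound bounds.\<close>

definition lb_invariant :: "params \<Rightarrow> state \<Rightarrow> bool" where
  "lb_invariant P s \<longleftrightarrow>
     (\<forall>p\<in>Ex s. \<forall>a\<in>and_children P p. a \<in> Gp s \<and> child0 P a \<in> Gp s \<and> child1 P a \<in> Gp s)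
   \<and> (\<forall>a\<in>Gp s. is_and a \<longrightarrow> (\<exists>p\<in>Ex s. a \<in> and_children P p))
   \<and> (\<forall>u\<in>Gp s. is_or u \<longrightarrow> LB s u \<le> fval P u)
   \<and> (\<forall>Q ov. ph s = PropL Q ov \<longrightarrow> Q \<subseteq> Ex s)"

lemma lb_invariant_bndA:
  assumes "lb_invariant P s" "a \<in> Gp s" "is_and a"
  shows "bndA P (LB s) a \<le> fvalA P a"
proof -
  obtain p where "p \<in> Ex s" "a \<in> and_children P p"
    using assms unfolding lb_invariant_def by blast
  with assms(1) have "child0 P a \<in> Gp s" "child1 P a \<in> Gp s"
    "is_or (child0 P a)" "is_or (child1 P a)"
    using and_children_edges unfolding lb_invariant_def by blast+
  with assms(1) show ?thesis
    unfolding bndA_def fvalA_def lb_invariant_def by (blast intro: add_mono)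
qed

context tree_prior
begin

lemma lb_invariant_backup:
  assumes "lb_invariant P s" "u \<in> Ex s" "is_or u"
  shows "backup P (LB s) u \<le> fval P u"
proof -
  have "backup P (LB s) u \<le> backup P (fval P) u"
  proof (rule backup_mono)
    fix a assume "a \<in> and_children P u"
    with assms(1,2) have "a \<in> Gp s" "is_and a"
      by (auto simp: lb_invariant_def and_children_def)
    with assms(1) show "bndA P (LB s) a \<le> bndA P (fval P) a"
      using lb_invariant_bndA by (simp add: bndA_def fvalA_def)
  qed
  also have "\<dots> \<le> fval P u" using assms(3) by (rule fval_ge_backup)
  finally show ?thesis .
qed

lemma lb_invariant_expand:
  assumes inv: "lb_invariant P s"
  shows "lb_invariant P (expand P s ov)"
proof -
  define new where "new = {w. \<exists>a \<in> and_children P ov. Gedge P a w}"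
  have new_or: "is_or w" if "w \<in> new" for w
    using that by (auto simp: new_def and_children_def Gedge_def edge_AndN_iff elim!: is_and.elims)
  have G': "Gp (expand P s ov) = Gp s \<union> {t. Gedge P ov t \<and> is_term t} \<union> and_children P ov \<union> new"
    and LB': "LB (expand P s ov) = (\<lambda>v. if v \<in> new then ereal (hh P v) else LB s v)"
    by (simp_all add: expand_def new_def Let_def)
  have "\<not> is_and w" if "w \<in> new" for w
    using new_or[OF that] by (cases w) auto
  moreover have "\<not> is_and t" "\<not> is_or t" if "is_term t" for t
    using that by (cases t; simp)+
  moreover have "\<not> is_or a" if "a \<in> and_children P ov" for a
    using that by (cases a) (auto simp: and_children_def)
  moreover have "a \<in> and_children P ov \<Longrightarrow> child0 P a \<in> new \<and> child1 P a \<in> new" for a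
    using and_children_edges by (auto simp: new_def)
  ultimately show ?thesis
    using inv hh_le_fval unfolding lb_invariant_def G' LB'
    by (auto simp: expand_def Let_def)
qed

lemma lb_invariant_lb_up:
  assumes inv: "lb_invariant P s" and Q: "ph s = PropL Q ov" "u \<in> Q"
  shows "lb_invariant P (s\<lparr>LB := (LB s)(u := backup P (LB s) u),
                          ph := PropL (Q - {u} \<union> parents_in P s u) ov\<rparr>)"
proof -
  have "u \<in> Ex s" using inv Q unfolding lb_invariant_def by blast
  then have sound: "backup P (LB s) u \<le> fval P u" if "is_or u"
    using inv that by (intro lb_invariant_backup)
  have "parents_in P s u \<subseteq> Ex s"
  proof
    fix p assume "p \<in> parents_in P s u"
    then obtain a where "a \<in> Gp s" "is_and a" "Gedge P p a" unfolding parents_in_def by blast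
    with inv show "p \<in> Ex s"
      unfolding lb_invariant_def by (metis and_children_unique_parent)
  qed
  with inv Q sound show ?thesis
    unfolding lb_invariant_def by auto
qed

lemma lb_invariant_mstep:
  assumes "mstep P s s'" "lb_invariant P s"
  shows "lb_invariant P s'"
  using assms
proof (cases rule: mstep.cases)
  case (iterate ov)
  then show ?thesis using assms(2) by (simp add: lb_invariant_expand)
next
  case (lb_up Q ov u)
  then show ?thesis using assms(2) by (simp add: lb_invariant_lb_up)
qed (auto simp: lb_invariant_def)

end

theorem lemma18:
  fixes P :: params and s0 s :: state
  assumes "rho1 P > 0" and "rho0 P > 0"
    and "0 < alpha P" and "alpha P < 1" and "beta P \<ge> 0"
    and "init_state P s0"
    and "(mstep P)\<^sup>*\<^sup>* s0 s"
  shows "(\<forall>u \<in> Gp s. is_or u \<longrightarrow> LB s u \<le> fval P u)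
       \<and> (\<forall>a \<in> Gp s. is_and a \<longrightarrow> bndA P (LB s) a \<le> fvalA P a)"
proof -
  interpret tree_prior P
    using assms(1-5) by unfold_locales
  have "lb_invariant P s0"
    using assms(6) hh_le_fval[of "root P"]
    unfolding init_state_def lb_invariant_def by (simp add: root_def)
  with assms(7) have "lb_invariant P s"
    by (induction rule: rtranclp_induct) (auto intro: lb_invariant_mstep)
  then show ?thesis
    using lb_invariant_bndA unfolding lb_invariant_def by blast
qed

end
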